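(* Let $\mathcal{X}=\{1,\dots,n\}$, let $\pi$ be a strictly positive probability distribution on $\mathcal{X}$, let $P$ be a $\pi$-reversible transition matrix, let $G$ be the Gibbs kernel induced by a partition $\mathcal{X}=\bigsqcup_{i=1}^k\mathcal{O}_i$, and let $A=\frac12(P+G)$. Then $$\|A-\Pi\|_{F,\pi}^2=\tfrac14\operatorname{Tr}(P^2)+\tfrac12\operatorname{Tr}(\overline{P})+\tfrac{k}{4}-1.$$
   Context: $\pi$-reversible means $\pi(x)P(x,y)=\pi(y)P(y,x)$ for all $x,y$. The Gibbs kernel is $G(x,y)=\pi(y)/\pi(\mathcal{O}(x))$ if $y\in\mathcal{O}(x)$ and $0$ otherwise, where $\mathcal{O}(x)$ is the block containing $x$ and $\pi(\mathcal{O})=\sum_{z\in\mathcal{O}}\pi(z)$. $\overline{P}(i,j)=\frac{1}{\pi(\mathcal{O}_i)}\sum_{x\in\mathcal{O}_i,\,y\in\mathcal{O}_j}\pi(x)P(x,y)$ is the projection chain. $\Pi$ is the matrix with every row equal to $\pi$. $\|M\|_{F,\pi}^2=\operatorname{Tr}(M^*M)$ with $M^*(x,y)=\pi(y)M(y,x)/\pi(x)$. *)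

theory Defs
  imports Complex_Main "HOL-Library.Disjoint_Sets"
begin

definition prob_dist_pos :: "('x::finite \<Rightarrow> real) \<Rightarrow> bool" where
  "prob_dist_pos \<pi> \<longleftrightarrow> (\<forall>x. \<pi> x > 0) \<and> (\<Sum>x\<in>UNIV. \<pi> x) = 1"

definition stochastic :: "('x::finite \<Rightarrow> 'x \<Rightarrow> real) \<Rightarrow> bool" where
  "stochastic P \<longleftrightarrow> (\<forall>x y. P x y \<ge> 0) \<and> (\<forall>x. (\<Sum>y\<in>UNIV. P x y) = 1)"

definition reversible :: "('x \<Rightarrow> real) \<Rightarrow> ('x \<Rightarrow> 'x \<Rightarrow> real) \<Rightarrow> bool" where
  "reversible \<pi> P \<longleftrightarrow> (\<forall>x y. \<pi> x * P x y = \<pi> y * P y x)"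

definition block :: "'x set set \<Rightarrow> 'x \<Rightarrow> 'x set" where
  "block \<O> x = (THE B. B \<in> \<O> \<and> x \<in> B)"

definition gibbs :: "('x \<Rightarrow> real) \<Rightarrow> 'x set set \<Rightarrow> 'x \<Rightarrow> 'x \<Rightarrow> real" where
  "gibbs \<pi> \<O> x y = (if y \<in> block \<O> x then \<pi> y / (\<Sum>z\<in>block \<O> x. \<pi> z) else 0)"

definition proj_chain :: "('x \<Rightarrow> real) \<Rightarrow> ('x \<Rightarrow> 'x \<Rightarrow> real) \<Rightarrow> 'x set \<Rightarrow> 'x set \<Rightarrow> real" where
  "proj_chain \<pi> P B C = (1 / (\<Sum>z\<in>B. \<pi> z)) * (\<Sum>x\<in>B. \<Sum>y\<in>C. \<pi> x * P x y)"

definition mtrace :: "('x::finite \<Rightarrow> 'x \<Rightarrow> real) \<Rightarrow> real" where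
  "mtrace M = (\<Sum>x\<in>UNIV. M x x)"

definition mmult :: "('x::finite \<Rightarrow> 'x \<Rightarrow> real) \<Rightarrow> ('x \<Rightarrow> 'x \<Rightarrow> real) \<Rightarrow> 'x \<Rightarrow> 'x \<Rightarrow> real" where
  "mmult M N x y = (\<Sum>z\<in>UNIV. M x z * N z y)"

definition adjoint_pi :: "('x \<Rightarrow> real) \<Rightarrow> ('x \<Rightarrow> 'x \<Rightarrow> real) \<Rightarrow> 'x \<Rightarrow> 'x \<Rightarrow> real" where
  "adjoint_pi \<pi> M x y = \<pi> y * M y x / \<pi> x"

definition frob_sq_pi :: "('x::finite \<Rightarrow> real) \<Rightarrow> ('x \<Rightarrow> 'x \<Rightarrow> real) \<Rightarrow> real" where
  "frob_sq_pi \<pi> M = mtrace (mmult (adjoint_pi \<pi> M) M)"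

definition Pi_mat :: "('x \<Rightarrow> real) \<Rightarrow> 'x \<Rightarrow> 'x \<Rightarrow> real" where
  "Pi_mat \<pi> x y = \<pi> y"

end

theory Submission
  imports Defs
begin

text \<open>
  With respect to the inner product \<open>\<langle>M, N\<rangle>\<^sub>\<pi> = Tr(M\<^sup>* N)\<close> the squared norm of
  \<open>A - \<Pi>\<close> expands bilinearly.  Every stochastic matrix \<open>M\<close> satisfies \<open>\<langle>M, \<Pi>\<rangle>\<^sub>\<pi> = 1\<close>, so
  the \<open>\<Pi>\<close>-terms contribute \<open>-2 + 1\<close>.  Reversibility gives \<open>\<langle>P, P\<rangle>\<^sub>\<pi> = Tr(P\<^sup>2)\<close>, and
  since the Gibbs kernel redistributes mass within a block proportionally to \<open>\<pi>\<close>,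
  \<open>\<langle>M, G\<rangle>\<^sub>\<pi>\<close> is the trace of the projection chain of \<open>M\<close>; for \<open>M = G\<close> this trace is \<open>k\<close>.
\<close>

definition frob_inner_pi ::
  "('x::finite \<Rightarrow> real) \<Rightarrow> ('x \<Rightarrow> 'x \<Rightarrow> real) \<Rightarrow> ('x \<Rightarrow> 'x \<Rightarrow> real) \<Rightarrow> real" where
  "frob_inner_pi \<pi> M N = mtrace (mmult (adjoint_pi \<pi> M) N)"

lemma frob_sq_pi_eq_inner: "frob_sq_pi \<pi> M = frob_inner_pi \<pi> M M"
  by (simp add: frob_sq_pi_def frob_inner_pi_def)

lemma frob_inner_pi_eq_sum:
  "frob_inner_pi \<pi> M N = (\<Sum>x\<in>UNIV. \<Sum>y\<in>UNIV. \<pi> x / \<pi> y * M x y * N x y)"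
  unfolding frob_inner_pi_def mtrace_def mmult_def adjoint_pi_def
  by (subst sum.swap) (simp add: mult.commute mult.left_commute)

lemma frob_inner_pi_commute: "frob_inner_pi \<pi> M N = frob_inner_pi \<pi> N M"
  by (simp add: frob_inner_pi_eq_sum mult.commute mult.left_commute)

lemma frob_inner_pi_add_left:
  "frob_inner_pi \<pi> (\<lambda>x y. M x y + N x y) K = frob_inner_pi \<pi> M K + frob_inner_pi \<pi> N K"
  by (simp add: frob_inner_pi_eq_sum algebra_simps sum.distrib)

lemma frob_inner_pi_diff_left:
  "frob_inner_pi \<pi> (\<lambda>x y. M x y - N x y) K = frob_inner_pi \<pi> M K - frob_inner_pi \<pi> N K"
  by (simp add: frob_inner_pi_eq_sum algebra_simps sum_subtractf)

lemma frob_inner_pi_scale_left: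
  "frob_inner_pi \<pi> (\<lambda>x y. c * M x y) K = c * frob_inner_pi \<pi> M K"
  by (simp add: frob_inner_pi_eq_sum sum_distrib_left algebra_simps)

lemma frob_inner_pi_add_right:
  "frob_inner_pi \<pi> K (\<lambda>x y. M x y + N x y) = frob_inner_pi \<pi> K M + frob_inner_pi \<pi> K N"
  by (simp add: frob_inner_pi_commute[of \<pi> K] frob_inner_pi_add_left)

lemma frob_inner_pi_diff_right:
  "frob_inner_pi \<pi> K (\<lambda>x y. M x y - N x y) = frob_inner_pi \<pi> K M - frob_inner_pi \<pi> K N"
  by (simp add: frob_inner_pi_commute[of \<pi> K] frob_inner_pi_diff_left)

lemma frob_inner_pi_scale_right:
  "frob_inner_pi \<pi> K (\<lambda>x y. c * M x y) = c * frob_inner_pi \<pi> K M"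
  by (simp add: frob_inner_pi_commute[of \<pi> K] frob_inner_pi_scale_left)

lemma frob_sq_pi_diff:
  "frob_sq_pi \<pi> (\<lambda>x y. M x y - N x y)
     = frob_sq_pi \<pi> M - 2 * frob_inner_pi \<pi> M N + frob_sq_pi \<pi> N"
  by (simp add: frob_sq_pi_eq_inner frob_inner_pi_diff_left frob_inner_pi_diff_right
      frob_inner_pi_commute[of \<pi> N M])

lemma frob_sq_pi_midpoint:
  "frob_sq_pi \<pi> (\<lambda>x y. (1/2) * (M x y + N x y))
     = (1/4) * frob_sq_pi \<pi> M + (1/2) * frob_inner_pi \<pi> M N + (1/4) * frob_sq_pi \<pi> N"
  unfolding frob_sq_pi_eq_inner frob_inner_pi_scale_left frob_inner_pi_scale_right
    frob_inner_pi_add_left frob_inner_pi_add_right frob_inner_pi_commute[of \<pi> N M]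
  by simp

lemma frob_inner_pi_Pi_mat:
  fixes \<pi> :: "'x::finite \<Rightarrow> real"
  assumes "\<And>x. \<pi> x \<noteq> 0" and "(\<Sum>x\<in>UNIV. \<pi> x) = 1" and "\<And>x. (\<Sum>y\<in>UNIV. M x y) = 1"
  shows "frob_inner_pi \<pi> M (Pi_mat \<pi>) = 1"
proof -
  have "frob_inner_pi \<pi> M (Pi_mat \<pi>) = (\<Sum>x\<in>UNIV. \<pi> x * (\<Sum>y\<in>UNIV. M x y))"
    unfolding frob_inner_pi_eq_sum Pi_mat_def sum_distrib_left
    using assms(1) by (intro sum.cong) auto
  then show ?thesis
    using assms(2,3) by simp
qed

lemma frob_sq_pi_reversible:
  assumes "\<And>x. \<pi> x \<noteq> 0" and "reversible \<pi> P"
  shows "frob_sq_pi \<pi> P = mtrace (mmult P P)"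
proof -
  have "\<pi> x / \<pi> y * P x y * P x y = P x y * P y x" for x y
    using assms(1)[of y] assms(2) unfolding reversible_def
    by (simp add: field_simps)
  then show ?thesis
    by (simp add: frob_sq_pi_eq_inner frob_inner_pi_eq_sum mtrace_def mmult_def)
qed

lemma partition_on_ex1_block:
  assumes "partition_on A \<O>" and "x \<in> A"
  shows "\<exists>!B. B \<in> \<O> \<and> x \<in> B"
proof -
  obtain B where B: "B \<in> \<O>" "x \<in> B"
    using assms partition_onD1 by blast
  moreover have "C = B" if "C \<in> \<O>" "x \<in> C" for C
    using partition_onD2[OF assms(1)] B that unfolding disjoint_def by blast
  ultimately show ?thesis by blast
qed

lemma block_eqI:
  assumes "partition_on A \<O>" and "B \<in> \<O>" and "x \<in> B"
  shows "block \<O> x = B"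
proof -
  have "x \<in> A"
    using assms partition_onD1 by blast
  show ?thesis
    unfolding block_def
    by (rule the1_equality[OF partition_on_ex1_block[OF assms(1) \<open>x \<in> A\<close>]]) (use assms in blast)
qed

lemma gibbs_on_block:
  assumes "partition_on A \<O>" and "B \<in> \<O>" and "x \<in> B"
  shows "gibbs \<pi> \<O> x y = (if y \<in> B then \<pi> y / (\<Sum>z\<in>B. \<pi> z) else 0)"
  by (simp add: gibbs_def block_eqI[OF assms])

lemma gibbs_row_sum_on_block:
  fixes \<pi> :: "'x::finite \<Rightarrow> real"
  assumes "\<And>x. \<pi> x > 0" and "partition_on A \<O>" and "B \<in> \<O>" and "x \<in> B"
  shows "(\<Sum>y\<in>B. gibbs \<pi> \<O> x y) = 1"
proof -
  have "(\<Sum>z\<in>B. \<pi> z) > 0"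
    using assms(1,4) by (intro sum_pos) auto
  then show ?thesis
    by (simp add: gibbs_on_block[OF assms(2-4)] flip: sum_divide_distrib)
qed

lemma gibbs_row_sum:
  fixes \<pi> :: "'x::finite \<Rightarrow> real"
  assumes "\<And>x. \<pi> x > 0" and "partition_on UNIV \<O>"
  shows "(\<Sum>y\<in>UNIV. gibbs \<pi> \<O> x y) = 1"
proof -
  obtain B where B: "B \<in> \<O>" "x \<in> B"
    using partition_on_ex1_block[OF assms(2)] by blast
  have "(\<Sum>y\<in>UNIV. gibbs \<pi> \<O> x y) = (\<Sum>y\<in>B. gibbs \<pi> \<O> x y)"
    by (rule sum.mono_neutral_right) (auto simp: gibbs_on_block[OF assms(2) B])
  then show ?thesis
    using gibbs_row_sum_on_block[OF assms B] by simp
qed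

lemma frob_inner_pi_gibbs:
  fixes \<pi> :: "'x::finite \<Rightarrow> real"
  assumes "\<And>x. \<pi> x \<noteq> 0" and "partition_on UNIV \<O>"
  shows "frob_inner_pi \<pi> M (gibbs \<pi> \<O>) = (\<Sum>B\<in>\<O>. proj_chain \<pi> M B B)"
proof -
  have row: "(\<Sum>y\<in>UNIV. \<pi> x / \<pi> y * M x y * gibbs \<pi> \<O> x y)
               = (\<Sum>y\<in>B. \<pi> x * M x y / (\<Sum>z\<in>B. \<pi> z))"
    if "B \<in> \<O>" "x \<in> B" for B x
  proof -
    have "(\<Sum>y\<in>UNIV. \<pi> x / \<pi> y * M x y * gibbs \<pi> \<O> x y)
            = (\<Sum>y\<in>UNIV. if y \<in> B then \<pi> x * M x y / (\<Sum>z\<in>B. \<pi> z) else 0)"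
      using assms(1) by (intro sum.cong) (simp_all add: gibbs_on_block[OF assms(2) that])
    then show ?thesis
      by (simp add: sum.If_cases)
  qed
  have "frob_inner_pi \<pi> M (gibbs \<pi> \<O>)
          = (\<Sum>B\<in>\<O>. \<Sum>x\<in>B. \<Sum>y\<in>UNIV. \<pi> x / \<pi> y * M x y * gibbs \<pi> \<O> x y)"
    unfolding frob_inner_pi_eq_sum by (rule sum.partition[OF finite_UNIV assms(2)])
  also have "\<dots> = (\<Sum>B\<in>\<O>. proj_chain \<pi> M B B)"
    using row by (intro sum.cong) (simp_all add: proj_chain_def sum_divide_distrib)
  finally show ?thesis .
qed

lemma proj_chain_gibbs_diag:
  fixes \<pi> :: "'x::finite \<Rightarrow> real"
  assumes "\<And>x. \<pi> x > 0" and "partition_on A \<O>" and "B \<in> \<O>"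
  shows "proj_chain \<pi> (gibbs \<pi> \<O>) B B = 1"
proof -
  have "B \<noteq> {}"
    using partition_onD3[OF assms(2)] assms(3) by auto
  then have "(\<Sum>z\<in>B. \<pi> z) > 0"
    using assms(1) by (intro sum_pos) auto
  moreover have "(\<Sum>x\<in>B. \<Sum>y\<in>B. \<pi> x * gibbs \<pi> \<O> x y) = (\<Sum>x\<in>B. \<pi> x)"
    using gibbs_row_sum_on_block[OF assms] by (simp flip: sum_distrib_left)
  ultimately show ?thesis
    by (simp add: proj_chain_def)
qed

lemma frob_sq_pi_gibbs:
  fixes \<pi> :: "'x::finite \<Rightarrow> real"
  assumes "\<And>x. \<pi> x > 0" and "partition_on UNIV \<O>"
  shows "frob_sq_pi \<pi> (gibbs \<pi> \<O>) = real (card \<O>)"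
  using assms
  by (simp add: frob_sq_pi_eq_inner frob_inner_pi_gibbs proj_chain_gibbs_diag dual_order.strict_implies_not_eq)

theorem corollary4p3:
  fixes \<pi> :: "'x::finite \<Rightarrow> real" and P :: "'x \<Rightarrow> 'x \<Rightarrow> real" and \<O> :: "'x set set"
  assumes "prob_dist_pos \<pi>"
    and "stochastic P"
    and "reversible \<pi> P"
    and "partition_on UNIV \<O>"
  shows "frob_sq_pi \<pi> (\<lambda>x y. (1/2) * (P x y + gibbs \<pi> \<O> x y) - Pi_mat \<pi> x y)
         = (1/4) * mtrace (mmult P P) + (1/2) * (\<Sum>B\<in>\<O>. proj_chain \<pi> P B B)
           + real (card \<O>) / 4 - 1"
proof -
  have pos: "\<And>x. \<pi> x > 0" and total: "(\<Sum>x\<in>UNIV. \<pi> x) = 1"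
    using assms(1) by (auto simp: prob_dist_pos_def)
  then have nonzero: "\<And>x. \<pi> x \<noteq> 0"
    by (simp add: dual_order.strict_implies_not_eq)
  define A where "A = (\<lambda>x y. (1/2) * (P x y + gibbs \<pi> \<O> x y))"
  have "(\<Sum>y\<in>UNIV. A x y) = 1" for x
    using assms(2) gibbs_row_sum[of \<pi>, OF pos assms(4)]
    by (simp add: A_def stochastic_def sum.distrib flip: sum_divide_distrib)
  then have "frob_inner_pi \<pi> A (Pi_mat \<pi>) = 1"
    by (rule frob_inner_pi_Pi_mat[OF nonzero total])
  moreover have "frob_sq_pi \<pi> (Pi_mat \<pi>) = 1"
    unfolding frob_sq_pi_eq_inner using nonzero total
    by (rule frob_inner_pi_Pi_mat) (simp add: Pi_mat_def total)
  ultimately have "frob_sq_pi \<pi> (\<lambda>x y. A x y - Pi_mat \<pi> x y) = frob_sq_pi \<pi> A - 1"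
    by (simp add: frob_sq_pi_diff)
  also have "frob_sq_pi \<pi> A = (1/4) * mtrace (mmult P P)
      + (1/2) * (\<Sum>B\<in>\<O>. proj_chain \<pi> P B B) + real (card \<O>) / 4"
    unfolding A_def frob_sq_pi_midpoint frob_sq_pi_reversible[OF nonzero assms(3)]
      frob_inner_pi_gibbs[OF nonzero assms(4)] frob_sq_pi_gibbs[of \<pi>, OF pos assms(4)]
    by simp
  finally show ?thesis
    unfolding A_def by simp
qed

end
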